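(* Let $d \ge 1$ be an integer and let $n$ be an even integer such that $n \ge 2d+4$, except that $n = 2d+6$ is excluded when $d$ is even. Then a spherical 3-design on $S^d$ of size $n$ exists.
   Context: $S^d$ denotes the unit sphere in $\mathbb{R}^{d+1}$. A spherical $t$-design on $S^d$ of size $n$ is a finite collection $X$ of $n$ points of $S^d$ such that the average of every polynomial $f(x_0,\dots,x_d)$ of degree at most $t$ over $S^d$ (with respect to surface measure) equals $\frac{1}{|X|}\sum_{x\in X} f(x)$. *)

theory Defs
  imports "HOL-Analysis.Analysis"
begin

definition poly_fun_deg_le :: "nat \<Rightarrow> (real^'n::finite \<Rightarrow> real) \<Rightarrow> bool" where
  "poly_fun_deg_le t f \<longleftrightarrow>
     (\<exists>(A :: ('n \<Rightarrow> nat) set) (c :: ('n \<Rightarrow> nat) \<Rightarrow> real).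
        finite A \<and> (\<forall>\<alpha>\<in>A. (\<Sum>i\<in>UNIV. \<alpha> i) \<le> t) \<and>
        (\<forall>x. f x = (\<Sum>\<alpha>\<in>A. c \<alpha> * (\<Prod>i\<in>UNIV. (x $ i) ^ (\<alpha> i)))))"

text \<open>The normalized surface measure is the image of the uniform probability measure on the
  unit ball under the radial projection x \<mapsto> x / |x| (the cone construction).\<close>
definition sphere_avg :: "(real^'n::finite \<Rightarrow> real) \<Rightarrow> real" where
  "sphere_avg f =
     (LINT x : ball 0 1 | lborel. f (x /\<^sub>R norm x)) / measure lborel (ball (0::real^'n) 1)"

definition spherical_design :: "nat \<Rightarrow> (real^'n::finite) set \<Rightarrow> bool" where
  "spherical_design t X \<longleftrightarrow>
     finite X \<and> X \<noteq> {} \<and> X \<subseteq> sphere 0 1 \<and>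
     (\<forall>f. poly_fun_deg_le t f \<longrightarrow> sphere_avg f = (\<Sum>x\<in>X. f x) / real (card X))"

end

theory Submission
  imports Defs
begin

text \<open>
  If \<open>V\<close> is a set of unit vectors in \<open>\<real>\<^sup>D\<close> containing no antipodal pair, then \<open>X = V \<union> -V\<close>
  averages every odd polynomial to \<open>0\<close>, exactly as the sphere does. Among the remaining
  monomials of degree at most \<open>3\<close> only the quadratic ones \<open>x\<^sub>i x\<^sub>k\<close> matter, whose sphere averages
  are \<open>\<delta>\<^sub>i\<^sub>k / D\<close> by the symmetries of the sphere. So \<open>X\<close> is a spherical \<open>3\<close>-design as soon as \<open>V\<close>
  is a unit-norm tight frame: \<open>\<Sum> v v\<^sup>T = (|V| / D) I\<close>, summed over \<open>v \<in> V\<close>. Harmonic frames, sampled from cosines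
  and sines of equally spaced angles, provide such \<open>V\<close> of every size \<open>m \<ge> D \<ge> 2\<close>.
\<close>

definition signed_perm :: "('n::finite \<Rightarrow> real) \<Rightarrow> ('n \<Rightarrow> 'n) \<Rightarrow> real^'n \<Rightarrow> real^'n" where
  "signed_perm s \<sigma> x = (\<chi> i. s i * x $ \<sigma> i)"

lemma linear_signed_perm: "linear (signed_perm s \<sigma>)"
  by (rule linearI) (auto simp: signed_perm_def vec_eq_iff algebra_simps)

lemma norm_signed_perm:
  assumes "bij \<sigma>" and "\<And>i. \<bar>s i\<bar> = 1"
  shows "norm (signed_perm s \<sigma> x) = norm x"
proof -
  have "signed_perm s \<sigma> x \<bullet> signed_perm s \<sigma> x = (\<Sum>i\<in>UNIV. x $ \<sigma> i * x $ \<sigma> i)"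
  proof -
    have sq: "s i * y * (s i * y) = y * y" for i y
    proof -
      have "s i * y * (s i * y) = (s i * s i) * (y * y)" by algebra
      then show ?thesis using abs_mult_self_eq[of "s i"] assms(2) by simp
    qed
    show ?thesis unfolding inner_vec_def signed_perm_def by (simp add: sq)
  qed
  also have "\<dots> = x \<bullet> x"
    unfolding inner_vec_def using sum.reindex_bij_betw[OF assms(1), of "\<lambda>i. x $ i * x $ i"] by simp
  finally show ?thesis by (simp add: norm_eq_sqrt_inner)
qed

lemma prod_Basis_vec: "(\<Prod>b\<in>(Basis::(real^'n::finite) set). f b) = (\<Prod>i\<in>UNIV. f (axis i 1))"
proof -
  have "inj (\<lambda>i::'n. axis i (1::real))" by (auto simp: inj_on_def axis_eq_axis)
  then show ?thesis unfolding Basis_vec_def by (simp add: prod.reindex UNION_singleton_eq_range)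
qed

lemma distr_lborel_signed_perm:
  fixes \<sigma> :: "'n::finite \<Rightarrow> 'n"
  assumes bij: "bij \<sigma>" and s: "\<And>i. \<bar>s i\<bar> = 1"
  shows "distr lborel borel (signed_perm s \<sigma>) = lborel"
proof -
  let ?T = "signed_perm s \<sigma>"
  have T_meas: "?T \<in> lborel \<rightarrow>\<^sub>M borel"
    by (simp add: borel_measurable_continuous_onI linear_continuous_on linear_linear linear_signed_perm)
  define \<tau> where "\<tau> = inv \<sigma>"
  have \<sigma>\<tau>: "\<sigma> (\<tau> k) = k" and \<tau>\<sigma>: "\<tau> (\<sigma> k) = k" for k
    unfolding \<tau>_def using bij by (simp_all add: bij_def surj_f_inv_f inv_f_f)
  have bij_\<tau>: "bij \<tau>" unfolding \<tau>_def using bij by (simp add: bij_imp_bij_inv)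
  have "lborel = distr lborel borel ?T"
  proof (rule lborel_eqI)
    fix l u :: "real^'n"
    assume le: "\<And>b. b \<in> Basis \<Longrightarrow> l \<bullet> b \<le> u \<bullet> b"
    have lu: "l $ i \<le> u $ i" for i using le[of "axis i 1"] by (simp add: cart_eq_inner_axis)
    \<comment> \<open>The preimage of a box is the box with coordinates permuted by \<open>\<tau>\<close> and reflected where \<open>s = -1\<close>.\<close>
    define l' where "l' = (\<chi> k. if s (\<tau> k) = 1 then l $ \<tau> k else - u $ \<tau> k)"
    define u' where "u' = (\<chi> k. if s (\<tau> k) = 1 then u $ \<tau> k else - l $ \<tau> k)"
    have s_cases: "s i = 1 \<or> s i = -1" for i using s[of i] by linarith
    have "x \<in> ?T -` box l u \<longleftrightarrow> x \<in> box l' u'" for x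
    proof -
      have "x \<in> ?T -` box l u \<longleftrightarrow> (\<forall>i. l $ i < s i * x $ \<sigma> i \<and> s i * x $ \<sigma> i < u $ i)"
        by (simp add: signed_perm_def mem_box_cart)
      also have "\<dots> \<longleftrightarrow> (\<forall>k. l $ \<tau> k < s (\<tau> k) * x $ k \<and> s (\<tau> k) * x $ k < u $ \<tau> k)"
        by (metis \<sigma>\<tau> \<tau>\<sigma>)
      also have "\<dots> \<longleftrightarrow> x \<in> box l' u'"
      proof -
        have "(l $ \<tau> k < s (\<tau> k) * y \<and> s (\<tau> k) * y < u $ \<tau> k) \<longleftrightarrow> (l' $ k < y \<and> y < u' $ k)" for k y
          using s_cases[of "\<tau> k"] unfolding l'_def u'_def by auto
        then show ?thesis unfolding mem_box_cart by presburger
      qed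
      finally show ?thesis .
    qed
    then have preimage: "?T -` box l u = box l' u'" by auto
    have "emeasure (distr lborel borel ?T) (box l u) = emeasure lborel (box l' u')"
      by (simp add: emeasure_distr[OF T_meas] preimage)
    also have "\<dots> = ennreal (\<Prod>k\<in>UNIV. u $ \<tau> k - l $ \<tau> k)"
    proof -
      have le': "l' $ k \<le> u' $ k" and len: "u' $ k - l' $ k = u $ \<tau> k - l $ \<tau> k" for k
        using lu[of "\<tau> k"] s_cases[of "\<tau> k"] by (auto simp: l'_def u'_def)
      have "\<forall>b\<in>Basis. l' \<bullet> b \<le> u' \<bullet> b"
        using le' by (auto simp: Basis_vec_def cart_eq_inner_axis[symmetric])
      then show ?thesis
        by (simp add: prod_Basis_vec cart_eq_inner_axis[symmetric] len)
    qed
    also have "\<dots> = (\<Prod>b\<in>Basis. (u - l) \<bullet> b)"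
      using prod.reindex_bij_betw[OF bij_\<tau>, of "\<lambda>i. u $ i - l $ i"]
      by (simp add: prod_Basis_vec cart_eq_inner_axis[symmetric])
    finally show "emeasure (distr lborel borel ?T) (box l u) = (\<Prod>b\<in>Basis. (u - l) \<bullet> b)" .
  qed simp
  then show ?thesis ..
qed

lemma borel_measurable_radial_projection:
  fixes g :: "real^'n::finite \<Rightarrow> real"
  assumes "g \<in> borel_measurable borel"
  shows "(\<lambda>x. g (x /\<^sub>R norm x)) \<in> borel_measurable borel"
proof -
  have "(\<lambda>x::real^'n. x /\<^sub>R norm x) \<in> borel_measurable borel" by measurable
  from measurable_compose[OF this assms] show ?thesis .
qed

lemma set_integrable_radial_projection:
  fixes g :: "real^'n::finite \<Rightarrow> real"
  assumes "continuous_on UNIV g"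
  shows "set_integrable lborel (ball 0 1) (\<lambda>x. g (x /\<^sub>R norm x))"
proof -
  have "bounded (g ` cball 0 1)"
    by (intro compact_imp_bounded compact_continuous_image continuous_on_subset[OF assms]) auto
  then obtain B where B: "\<And>y. y \<in> cball 0 1 \<Longrightarrow> norm (g y) \<le> B"
    unfolding bounded_iff by blast
  have "x /\<^sub>R norm x \<in> cball 0 1" for x :: "real^'n"
    by (cases "x = 0") auto
  then have "AE x\<in>ball 0 1 in lborel. norm (g (x /\<^sub>R norm x)) \<le> B"
    using B by auto
  moreover have "emeasure lborel (ball (0::real^'n) 1) < \<infinity>" by (rule emeasure_lborel_ball_finite)
  ultimately show ?thesis
    using borel_measurable_radial_projection[OF borel_measurable_continuous_onI[OF assms]]
    unfolding set_integrable_def by (intro integrableI_bounded_set_indicator[where B=B]) simp_all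
qed

lemma sphere_avg_linear_isometry:
  fixes T :: "real^'n::finite \<Rightarrow> real^'n"
  assumes "linear T" and "\<And>x. norm (T x) = norm x" and "distr lborel borel T = lborel"
    and "g \<in> borel_measurable borel"
  shows "sphere_avg (\<lambda>x. g (T x)) = sphere_avg g"
proof -
  have T_meas: "T \<in> lborel \<rightarrow>\<^sub>M borel"
    using assms(1) by (simp add: borel_measurable_continuous_onI linear_continuous_on linear_linear)
  have "T (x /\<^sub>R norm x) = T x /\<^sub>R norm (T x)" and "indicator (ball 0 1) (T x) = (indicator (ball 0 1) x :: real)"
    for x using assms(1,2) by (simp_all add: linear_scale indicator_def)
  then have "(LINT x:ball 0 1|lborel. g (T (x /\<^sub>R norm x)))
      = (LINT x|lborel. indicator (ball 0 1) (T x) *\<^sub>R g (T x /\<^sub>R norm (T x)))"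
    unfolding set_lebesgue_integral_def by simp
  also have "\<dots> = integral\<^sup>L (distr lborel borel T) (\<lambda>x. indicator (ball 0 1) x *\<^sub>R g (x /\<^sub>R norm x))"
    using borel_measurable_radial_projection[OF assms(4)]
    by (intro integral_distr[OF T_meas, symmetric] borel_measurable_scaleR borel_measurable_indicator) simp_all
  also have "\<dots> = (LINT x:ball 0 1|lborel. g (x /\<^sub>R norm x))"
    unfolding set_lebesgue_integral_def assms(3) ..
  finally show ?thesis unfolding sphere_avg_def by simp
qed

lemma sphere_avg_signed_perm:
  fixes \<sigma> :: "'n::finite \<Rightarrow> 'n"
  assumes "bij \<sigma>" and "\<And>i. \<bar>s i\<bar> = 1" and "g \<in> borel_measurable borel"
  shows "sphere_avg (\<lambda>x. g (signed_perm s \<sigma> x)) = sphere_avg g"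
  using assms
  by (intro sphere_avg_linear_isometry linear_signed_perm norm_signed_perm distr_lborel_signed_perm)

lemma sphere_avg_eq_0_if_antisymmetric:
  fixes \<sigma> :: "'n::finite \<Rightarrow> 'n"
  assumes "bij \<sigma>" and "\<And>i. \<bar>s i\<bar> = 1" and "g \<in> borel_measurable borel"
    and "\<And>x. g (signed_perm s \<sigma> x) = - g x"
  shows "sphere_avg g = 0"
proof -
  have "sphere_avg (\<lambda>x. - g x) = - sphere_avg g"
    unfolding sphere_avg_def set_lebesgue_integral_def by simp
  with sphere_avg_signed_perm[of \<sigma> s g] assms show ?thesis by simp
qed

lemma sphere_avg_cong:
  fixes f g :: "real^'n::finite \<Rightarrow> real"
  assumes "\<And>x. x \<in> sphere 0 1 \<Longrightarrow> f x = g x"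
    and "f \<in> borel_measurable borel" and "g \<in> borel_measurable borel"
  shows "sphere_avg f = sphere_avg g"
proof -
  have "AE x\<in>ball 0 1 in lborel. f (x /\<^sub>R norm x) = g (x /\<^sub>R norm x)"
    using AE_lborel_singleton[of 0] by eventually_elim (simp add: assms(1))
  then have "(LINT x:ball 0 1|lborel. f (x /\<^sub>R norm x)) = (LINT x:ball 0 1|lborel. g (x /\<^sub>R norm x))"
    using borel_measurable_radial_projection[OF assms(2)] borel_measurable_radial_projection[OF assms(3)]
    by (intro set_lebesgue_integral_cong_AE) simp_all
  then show ?thesis unfolding sphere_avg_def by simp
qed

lemma sphere_avg_const [simp]: "sphere_avg (\<lambda>_::real^'n::finite. c) = c"
proof -
  have "measure lborel (ball (0::real^'n) 1) > 0" by (rule content_ball_pos) simp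
  moreover have "emeasure lborel (ball (0::real^'n) 1) < \<infinity>" by (rule emeasure_lborel_ball_finite)
  ultimately show ?thesis unfolding sphere_avg_def by (simp add: set_integral_const less_top)
qed

lemma sphere_avg_sum:
  fixes f :: "'a \<Rightarrow> real^'n::finite \<Rightarrow> real"
  assumes "finite A" and "\<And>a. a \<in> A \<Longrightarrow> continuous_on UNIV (f a)"
  shows "sphere_avg (\<lambda>x. \<Sum>a\<in>A. c a * f a x) = (\<Sum>a\<in>A. c a * sphere_avg (f a))"
proof -
  have "(LINT x:ball 0 1|lborel. \<Sum>a\<in>A. c a * f a (x /\<^sub>R norm x))
      = (\<Sum>a\<in>A. LINT x:ball 0 1|lborel. c a * f a (x /\<^sub>R norm x))"
    unfolding set_lebesgue_integral_def scaleR_sum_right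
    using assms set_integrable_radial_projection[THEN set_integrable_mult_right]
    by (intro Bochner_Integration.integral_sum) (auto simp: set_integrable_def)
  then show ?thesis
    by (simp add: sphere_avg_def set_integral_mult_right sum_divide_distrib)
qed

lemma sphere_avg_coord_mult:
  fixes k j :: "'n::finite"
  shows "sphere_avg (\<lambda>x::real^'n. x $ k * x $ j) = (if k = j then 1 / CARD('n) else 0)"
proof (cases "k = j")
  case True
  \<comment> \<open>All the \<open>x\<^sub>i\<^sup>2\<close> have the same average by symmetry, and they add up to \<open>1\<close> on the sphere.\<close>
  have swap: "sphere_avg (\<lambda>x::real^'n. (x $ i)^2) = sphere_avg (\<lambda>x. (x $ k)^2)" for i
  proof -
    have "sphere_avg (\<lambda>x::real^'n. (signed_perm (\<lambda>_. 1) (Transposition.transpose i k) x $ k)^2) = sphere_avg (\<lambda>x. (x $ k)^2)"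
      by (rule sphere_avg_signed_perm) (simp_all, measurable)
    then show ?thesis by (simp add: signed_perm_def)
  qed
  have "1 = sphere_avg (\<lambda>x::real^'n. \<Sum>i\<in>UNIV. 1 * (x $ i)^2)"
    by (subst sphere_avg_cong[where g="\<lambda>_. 1"]) (simp_all add: norm_eq_1 inner_vec_def power2_eq_square)
  also have "\<dots> = (\<Sum>i\<in>UNIV. 1 * sphere_avg (\<lambda>x::real^'n. (x $ i)^2))"
    by (rule sphere_avg_sum) (simp_all add: continuous_on_power continuous_on_component)
  also have "\<dots> = (\<Sum>i\<in>(UNIV::'n set). sphere_avg (\<lambda>x::real^'n. (x $ k)^2))"
    by (intro sum.cong refl) (subst mult_1, rule swap)
  finally have "CARD('n) * sphere_avg (\<lambda>x::real^'n. (x $ k)^2) = 1"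
    by simp
  with True show ?thesis by (simp add: power2_eq_square eq_divide_eq mult.commute)
next
  case False
  define s where "s i = (if i = k then -1 else 1 :: real)" for i
  have "\<bar>s i\<bar> = 1" for i by (simp add: s_def)
  moreover have "(\<lambda>x::real^'n. x $ k * x $ j) \<in> borel_measurable borel" by measurable
  moreover have "signed_perm s id x $ k * signed_perm s id x $ j = - (x $ k * x $ j)" for x
    using False by (simp add: s_def signed_perm_def)
  ultimately have "sphere_avg (\<lambda>x::real^'n. x $ k * x $ j) = 0"
    by (intro sphere_avg_eq_0_if_antisymmetric[OF bij_id])
  with False show ?thesis by simp
qed

definition monomial :: "('n::finite \<Rightarrow> nat) \<Rightarrow> real^'n \<Rightarrow> real" where
  "monomial \<alpha> x = (\<Prod>i\<in>UNIV. (x $ i) ^ \<alpha> i)"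

lemma continuous_on_monomial: "continuous_on UNIV (monomial \<alpha>)"
  unfolding monomial_def by (intro continuous_intros)

lemma monomial_uminus: "monomial \<alpha> (- x) = (-1) ^ (\<Sum>i\<in>UNIV. \<alpha> i) * monomial \<alpha> x"
proof -
  have "monomial \<alpha> (- x) = (\<Prod>i\<in>UNIV. (-1) ^ \<alpha> i * (x $ i) ^ \<alpha> i)"
    unfolding monomial_def by (simp add: power_minus[of "x $ _"])
  then show ?thesis by (simp add: prod.distrib power_sum monomial_def)
qed

lemma monomial_degree_0: "(\<Sum>i\<in>UNIV. \<alpha> i) = 0 \<Longrightarrow> monomial \<alpha> = (\<lambda>_. 1)"
  by (simp add: monomial_def fun_eq_iff)

lemma monomial_degree_Suc:
  fixes \<alpha> :: "'n::finite \<Rightarrow> nat"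
  assumes "(\<Sum>i\<in>UNIV. \<alpha> i) = Suc n"
  obtains k \<beta> where "(\<Sum>i\<in>UNIV. \<beta> i) = n" and "\<And>x. monomial \<alpha> x = x $ k * monomial \<beta> x"
proof -
  obtain k where k: "\<alpha> k > 0"
    using assms by (metis Zero_not_Suc gr0I sum.neutral)
  define \<beta> where "\<beta> = \<alpha>(k := \<alpha> k - 1)"
  have "(\<Sum>i\<in>UNIV. \<alpha> i) = \<alpha> k + (\<Sum>i\<in>UNIV - {k}. \<beta> i)"
    by (simp add: sum.remove \<beta>_def)
  moreover have "(\<Sum>i\<in>UNIV. \<beta> i) = \<beta> k + (\<Sum>i\<in>UNIV - {k}. \<beta> i)"
    by (simp add: sum.remove)
  ultimately have "(\<Sum>i\<in>UNIV. \<beta> i) = n"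
    using assms k by (simp add: \<beta>_def)
  moreover have "monomial \<alpha> x = x $ k * monomial \<beta> x" for x
  proof -
    have "(x $ k) ^ \<alpha> k = x $ k * (x $ k) ^ \<beta> k"
      using k by (simp add: \<beta>_def flip: power_Suc)
    moreover have "(\<Prod>i\<in>UNIV - {k}. (x $ i) ^ \<alpha> i) = (\<Prod>i\<in>UNIV - {k}. (x $ i) ^ \<beta> i)"
      by (simp add: \<beta>_def)
    ultimately show ?thesis
      by (simp add: monomial_def prod.remove[of UNIV k])
  qed
  ultimately show ?thesis by (rule that)
qed

lemma monomial_degree_2:
  fixes \<alpha> :: "'n::finite \<Rightarrow> nat"
  assumes "(\<Sum>i\<in>UNIV. \<alpha> i) = 2"
  obtains k j where "monomial \<alpha> = (\<lambda>x. x $ k * x $ j)"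
proof -
  have "(\<Sum>i\<in>UNIV. \<alpha> i) = Suc (Suc 0)" using assms by simp
  then obtain k \<beta> where \<beta>_deg: "(\<Sum>i\<in>UNIV. \<beta> i) = Suc 0" and \<alpha>: "\<And>x. monomial \<alpha> x = x $ k * monomial \<beta> x"
    using monomial_degree_Suc by blast
  from \<beta>_deg obtain j \<gamma> where "(\<Sum>i\<in>UNIV. \<gamma> i) = 0" and \<beta>: "\<And>x. monomial \<beta> x = x $ j * monomial \<gamma> x"
    using monomial_degree_Suc by blast
  then have "monomial \<alpha> = (\<lambda>x. x $ k * x $ j)"
    by (simp add: fun_eq_iff \<alpha> \<beta> monomial_degree_0)
  then show ?thesis by (rule that)
qed

lemma spherical_designI_monomials:
  fixes X :: "(real^'n::finite) set"
  assumes "finite X" and "X \<noteq> {}" and "X \<subseteq> sphere 0 1"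
    and "\<And>\<alpha>. (\<Sum>i\<in>UNIV. \<alpha> i) \<le> t \<Longrightarrow> (\<Sum>x\<in>X. monomial \<alpha> x) / card X = sphere_avg (monomial \<alpha>)"
  shows "spherical_design t X"
  unfolding spherical_design_def
proof (intro conjI allI impI assms(1-3))
  fix f :: "real^'n \<Rightarrow> real"
  assume "poly_fun_deg_le t f"
  then obtain A c where A: "finite A" "\<forall>\<alpha>\<in>A. (\<Sum>i\<in>UNIV. \<alpha> i) \<le> t"
    and f: "f = (\<lambda>x. \<Sum>\<alpha>\<in>A. c \<alpha> * monomial \<alpha> x)"
    unfolding poly_fun_deg_le_def monomial_def by blast
  have "sphere_avg f = (\<Sum>\<alpha>\<in>A. c \<alpha> * sphere_avg (monomial \<alpha>))"
    unfolding f using A(1) continuous_on_monomial by (rule sphere_avg_sum)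
  also have "\<dots> = (\<Sum>\<alpha>\<in>A. c \<alpha> * ((\<Sum>x\<in>X. monomial \<alpha> x) / card X))"
    using A(2) assms(4) by simp
  also have "\<dots> = (\<Sum>x\<in>X. f x) / card X"
    unfolding f by (simp add: sum_divide_distrib sum_distrib_left sum.swap[of _ A X])
  finally show "sphere_avg f = (\<Sum>x\<in>X. f x) / card X" .
qed

lemma spherical_3_design_antipodal_tight_frame:
  fixes V :: "(real^'n::finite) set"
  assumes "finite V" and "V \<noteq> {}" and "V \<subseteq> sphere 0 1" and "V \<inter> uminus ` V = {}"
    and frame: "\<And>i k. (\<Sum>v\<in>V. v $ i * v $ k) = (if i = k then card V / CARD('n) else 0)"
  shows "spherical_design 3 (V \<union> uminus ` V)" and "card (V \<union> uminus ` V) = 2 * card V"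
proof -
  let ?X = "V \<union> uminus ` V"
  have sum_X: "(\<Sum>x\<in>?X. F x) = (\<Sum>v\<in>V. F v + F (- v))" for F :: "real^'n \<Rightarrow> real"
    using assms(1,4) by (simp add: sum.union_disjoint sum.reindex sum.distrib)
  show card_X: "card ?X = 2 * card V"
    using assms(1,4) by (simp add: card_Un_disjoint card_image)
  have "(\<Sum>x\<in>?X. monomial \<alpha> x) / card ?X = sphere_avg (monomial \<alpha>)"
    if deg: "(\<Sum>i\<in>UNIV. \<alpha> i) \<le> 3" for \<alpha> :: "'n \<Rightarrow> nat"
  proof (cases "even (\<Sum>i\<in>UNIV. \<alpha> i)")
    case False
    have "signed_perm (\<lambda>_. -1) id x = - x" for x :: "real^'n"
      by (simp add: signed_perm_def vec_eq_iff)
    then have "monomial \<alpha> (signed_perm (\<lambda>_. -1) id x) = - monomial \<alpha> x" for x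
      using False by (simp add: monomial_uminus)
    then have "sphere_avg (monomial \<alpha>) = 0"
      using borel_measurable_continuous_onI[OF continuous_on_monomial]
      by (intro sphere_avg_eq_0_if_antisymmetric[OF bij_id, of "\<lambda>_. -1"]) simp_all
    moreover have "(\<Sum>x\<in>?X. monomial \<alpha> x) = 0"
      using False by (simp add: sum_X monomial_uminus)
    ultimately show ?thesis by simp
  next
    case True
    have "(\<Sum>i\<in>UNIV. \<alpha> i) = 0 \<or> (\<Sum>i\<in>UNIV. \<alpha> i) = 2"
    proof -
      have "s = 0 \<or> s = 2" if "s \<le> 3" and "even s" for s :: nat
        using that by presburger
      with deg True show ?thesis by blast
    qed
    then show ?thesis
    proof
      assume "(\<Sum>i\<in>UNIV. \<alpha> i) = 0"
      then show ?thesis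
        using assms(1,2) by (simp add: monomial_degree_0 sum_X card_X)
    next
      assume "(\<Sum>i\<in>UNIV. \<alpha> i) = 2"
      then obtain k j where kj: "monomial \<alpha> = (\<lambda>x. x $ k * x $ j)"
        by (rule monomial_degree_2)
      have "(\<Sum>x\<in>?X. monomial \<alpha> x) = 2 * (\<Sum>v\<in>V. v $ k * v $ j)"
        by (simp add: sum_X kj sum_distrib_left mult.commute)
      then show ?thesis
        unfolding kj
        using assms(1,2) by (simp add: card_X sphere_avg_coord_mult frame)
    qed
  qed
  then show "spherical_design 3 ?X"
    using assms(1-3) by (intro spherical_designI_monomials) auto
qed

lemma sum_cos_equally_spaced:
  fixes m :: nat and s :: int and g :: real
  assumes "\<bar>s\<bar> < int m"
  shows "(\<Sum>j<m. cos (2 * pi * s * j / m - g)) = (if s = 0 then m * cos g else 0)"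
proof (cases "s = 0")
  case False
  have m: "real m > 0" using assms by linarith
  \<comment> \<open>The sum is the real part of \<open>cis (-g)\<close> times a geometric sum of the \<open>m\<close>-th root of unity \<open>z \<noteq> 1\<close>.\<close>
  define z where "z = cis (2 * pi * s / m)"
  have "z ^ m = cis (m * (2 * pi * s / m))"
    unfolding z_def by (rule Complex.DeMoivre)
  also have "\<dots> = 1"
    using m by (simp add: cis_multiple_2pi)
  finally have z_pow: "z ^ m = 1" .
  have "z \<noteq> 1"
  proof
    assume "z = 1"
    then have "cos (2 * pi * s / m) = 1"
      unfolding z_def by (metis cis.sel(1) one_complex.sel(1))
    then obtain t :: int where "2 * pi * s / m = t * 2 * pi"
      by (auto simp: cos_one_2pi_int)
    then have "real_of_int s = real_of_int (t * int m)"
      using m by (simp add: field_simps)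
    then have "s = t * int m" by (simp only: of_int_eq_iff)
    with False have "int m \<le> \<bar>t\<bar> * int m" and "\<bar>s\<bar> = \<bar>t\<bar> * int m"
      by (auto simp: mult_le_cancel_right1 abs_mult)
    with assms show False by linarith
  qed
  with z_pow have geometric: "(\<Sum>j<m. z ^ j) = 0"
    using one_diff_power_eq[of z m] by simp
  have "cis (2 * pi * s * j / m - g) = cis (- g) * z ^ j" for j :: nat
    unfolding z_def Complex.DeMoivre cis_mult by (simp add: algebra_simps)
  then have "(\<Sum>j<m. cis (2 * pi * s * j / m - g)) = 0"
    by (simp add: geometric flip: sum_distrib_left)
  then have "Re (\<Sum>j<m. cis (2 * pi * s * j / m - g)) = 0" by simp
  with False show ?thesis by (simp add: Re_sum)
qed simp

lemma sum_cos_mult_cos_equally_spaced: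
  fixes A B m :: nat and g h :: real
  assumes "even (A + B)" and "A < m" and "B < m"
  shows "(\<Sum>j<m. cos (pi * A * j / m - g) * cos (pi * B * j / m - h)) =
    (if A = B then m / 2 * cos (g - h) else 0) + (if A + B = 0 then m / 2 * cos (g + h) else 0)"
proof -
  \<comment> \<open>Product to sum: the two frequencies \<open>(A - B) / 2\<close> and \<open>(A + B) / 2\<close> are integers of modulus below \<open>m\<close>.\<close>
  define d :: int where "d = (int A - int B) div 2"
  define e :: int where "e = (int A + int B) div 2"
  have d: "2 * d = int A - int B" and e: "2 * e = int A + int B"
    unfolding d_def e_def using assms(1) by presburger+
  have product_to_sum: "cos (pi * A * j / m - g) * cos (pi * B * j / m - h) =
      (cos (2 * pi * d * j / m - (g - h)) + cos (2 * pi * e * j / m - (g + h))) / 2" for j :: nat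
  proof -
    have "real A - real B = 2 * d" and "real A + real B = 2 * e"
      using arg_cong[OF d, of real_of_int] arg_cong[OF e, of real_of_int] by simp_all
    moreover have "pi * A * j / m - g - (pi * B * j / m - h) = pi * (real A - real B) * j / m - (g - h)"
      and "pi * A * j / m - g + (pi * B * j / m - h) = pi * (real A + real B) * j / m - (g + h)"
      by (simp_all add: algebra_simps add_divide_distrib diff_divide_distrib)
    ultimately have diff: "pi * A * j / m - g - (pi * B * j / m - h) = 2 * pi * d * j / m - (g - h)"
      and sum: "pi * A * j / m - g + (pi * B * j / m - h) = 2 * pi * e * j / m - (g + h)"
      by (simp_all add: ac_simps)
    show ?thesis unfolding cos_times_cos diff sum ..
  qed
  then have "(\<Sum>j<m. cos (pi * A * j / m - g) * cos (pi * B * j / m - h)) =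
      ((\<Sum>j<m. cos (2 * pi * d * j / m - (g - h))) + (\<Sum>j<m. cos (2 * pi * e * j / m - (g + h)))) / 2"
    unfolding product_to_sum by (simp add: sum.distrib flip: sum_divide_distrib)
  also have "\<dots> = ((if A = B then m * cos (g - h) else 0) + (if A + B = 0 then m * cos (g + h) else 0)) / 2"
  proof -
    have "\<bar>d\<bar> < int m" and "\<bar>e\<bar> < int m"
      using d e assms(2,3) by linarith+
    moreover have "d = 0 \<longleftrightarrow> A = B" and "e = 0 \<longleftrightarrow> A + B = 0"
      using d e by linarith+
    ultimately show ?thesis by (simp only: sum_cos_equally_spaced)
  qed
  finally show ?thesis by auto
qed

text \<open>
  For odd \<open>D\<close> the coordinates are \<open>1 / sqrt D\<close> (frequency \<open>0\<close>, phase \<open>\<pi>/4\<close>) followed by cosine/sine pairs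
  of the angles \<open>2 \<pi> s j / m\<close>, \<open>1 \<le> s \<le> (D - 1) / 2\<close>: the harmonic frame. For even \<open>D\<close> the pairs use the
  odd multiples \<open>(2 s + 1) \<pi> j / m\<close>, so the \<open>m\<close> vectors are half of the \<open>2 m\<close> harmonic frame vectors,
  one from each antipodal pair.
\<close>

definition harmonic_freq :: "nat \<Rightarrow> nat \<Rightarrow> nat" where
  "harmonic_freq D p = (if odd D then 2 * ((p + 1) div 2) else 2 * (p div 2) + 1)"

definition harmonic_phase :: "nat \<Rightarrow> nat \<Rightarrow> real" where
  "harmonic_phase D p =
     (if odd D then (if p = 0 then pi / 4 else if odd p then 0 else pi / 2)
      else (if odd p then pi / 2 else 0))"

definition harmonic_frame :: "nat \<Rightarrow> nat \<Rightarrow> nat \<Rightarrow> nat \<Rightarrow> real" where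
  "harmonic_frame D m p j = sqrt (2 / D) * cos (pi * harmonic_freq D p * j / m - harmonic_phase D p)"

lemma even_harmonic_freq_add: "even (harmonic_freq D p + harmonic_freq D q)"
  unfolding harmonic_freq_def by simp

lemma harmonic_freq_less: "p < D \<Longrightarrow> harmonic_freq D p < D"
  unfolding harmonic_freq_def by presburger

lemma harmonic_freq_eq_0: "harmonic_freq D p = 0 \<longleftrightarrow> odd D \<and> p = 0"
  unfolding harmonic_freq_def by presburger

lemma harmonic_freq_eq_iff:
  "harmonic_freq D p = harmonic_freq D q \<longleftrightarrow>
     p = q \<or> (if odd D then (p + 1) div 2 = (q + 1) div 2 else p div 2 = q div 2)"
  unfolding harmonic_freq_def by auto

lemma harmonic_frame_orthogonal:
  assumes "p < D" and "q < D" and "D \<le> m"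
  shows "(\<Sum>j<m. harmonic_frame D m p j * harmonic_frame D m q j) = (if p = q then m / D else 0)"
proof -
  let ?a = "harmonic_freq D" and ?b = "harmonic_phase D"
  have "harmonic_frame D m p j * harmonic_frame D m q j =
      (sqrt (2 / D))\<^sup>2 * (cos (pi * ?a p * j / m - ?b p) * cos (pi * ?a q * j / m - ?b q))" for j
    unfolding harmonic_frame_def power2_eq_square by (simp only: ac_simps)
  then have "(\<Sum>j<m. harmonic_frame D m p j * harmonic_frame D m q j) =
      2 / D * (\<Sum>j<m. cos (pi * ?a p * j / m - ?b p) * cos (pi * ?a q * j / m - ?b q))"
    by (simp add: sum_distrib_left)
  also have "\<dots> = 2 / D * ((if ?a p = ?a q then m / 2 * cos (?b p - ?b q) else 0) +
      (if ?a p + ?a q = 0 then m / 2 * cos (?b p + ?b q) else 0))"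
    using harmonic_freq_less[OF assms(1)] harmonic_freq_less[OF assms(2)] assms(3)
    by (subst sum_cos_mult_cos_equally_spaced[OF even_harmonic_freq_add]) auto
  also have "\<dots> = (if p = q then m / D else 0)"
  proof -
    \<comment> \<open>Distinct coordinates sharing a frequency are a cosine and a sine, with phases differing by \<open>\<pi>/2\<close>;
      the constant coordinate of odd \<open>D\<close> has phase \<open>\<pi>/4\<close>.\<close>
    have "cos (?b p - ?b q) = 0" if "p \<noteq> q" and "?a p = ?a q"
      using that unfolding harmonic_freq_eq_iff harmonic_phase_def by (auto split: if_splits) presburger+
    moreover have "cos (?b p + ?b p) = 0" if "?a p = 0"
      using that unfolding harmonic_freq_eq_0 harmonic_phase_def by simp
    moreover have "?a p + ?a q = 0 \<longleftrightarrow> ?a p = 0 \<and> p = q"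
      using harmonic_freq_eq_0[of D p] harmonic_freq_eq_0[of D q] by auto
    ultimately show ?thesis using assms(1) by auto
  qed
  finally show ?thesis .
qed

lemma sum_lessThan_double:
  fixes g :: "nat \<Rightarrow> 'a::comm_monoid_add"
  shows "(\<Sum>p<2 * k. g p) = (\<Sum>s<k. g (2 * s) + g (2 * s + 1))"
  by (induction k) (auto simp: algebra_simps)

lemma harmonic_frame_unit:
  assumes "D \<ge> 1"
  shows "(\<Sum>p<D. (harmonic_frame D m p j)\<^sup>2) = 1"
proof -
  define c where "c p = (cos (pi * harmonic_freq D p * j / m - harmonic_phase D p))\<^sup>2" for p
  \<comment> \<open>Coordinates come in cosine/sine pairs of equal frequency, each pair contributing \<open>2 / D\<close>.\<close>
  have pair: "c p + c (p + 1) = 1"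
    if "harmonic_freq D (p + 1) = harmonic_freq D p" "harmonic_phase D p = 0" "harmonic_phase D (p + 1) = pi / 2" for p
    unfolding c_def that by (simp add: cos_diff)
  have "(\<Sum>p<D. (harmonic_frame D m p j)\<^sup>2) = 2 / D * (\<Sum>p<D. c p)"
    by (simp add: harmonic_frame_def c_def power_mult_distrib sum_distrib_left)
  also have "(\<Sum>p<D. c p) = D / 2"
  proof (cases "odd D")
    case True
    then obtain k where k: "D = Suc (2 * k)" by (metis oddE Suc_eq_plus1)
    have "c 0 = 1 / 2"
      using True by (simp add: c_def harmonic_freq_def harmonic_phase_def cos_45 power_divide)
    moreover have "c (Suc (2 * s)) + c (Suc (2 * s + 1)) = 1" for s
      using pair[of "Suc (2 * s)"] True by (simp add: harmonic_freq_def harmonic_phase_def)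
    ultimately show ?thesis
      unfolding k sum.lessThan_Suc_shift sum_lessThan_double by simp
  next
    case False
    then obtain k where k: "D = 2 * k" by (metis evenE)
    have "c (2 * s) + c (2 * s + 1) = 1" for s
      using False by (intro pair) (simp_all add: harmonic_freq_def harmonic_phase_def)
    then show ?thesis
      unfolding k sum_lessThan_double by simp
  qed
  finally show ?thesis
    using assms by simp
qed

lemma harmonic_frame_not_antipodal:
  assumes "2 \<le> D" and "j < m" and "j' < m"
  obtains p where "p < D" and "harmonic_frame D m p j \<noteq> - harmonic_frame D m p j'"
proof -
  have c: "sqrt (2 / D) > 0" using assms(1) by simp
  show ?thesis
  proof (cases "odd D")
    case True
    \<comment> \<open>The constant coordinate \<open>1 / sqrt D\<close> is positive.\<close>
    have pos: "harmonic_frame D m 0 i > 0" for i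
      using True c by (simp add: harmonic_frame_def harmonic_freq_def harmonic_phase_def cos_45)
    have "harmonic_frame D m 0 j \<noteq> - harmonic_frame D m 0 j'"
      using pos[of j] pos[of j'] by linarith
    with assms(1) show ?thesis by (intro that[of 0]) auto
  next
    case False
    \<comment> \<open>The first two coordinates are \<open>cos\<close> and \<open>sin\<close> of \<open>\<pi> j / m \<in> [0, \<pi>)\<close>: an upper half circle.\<close>
    let ?x = "\<lambda>i. pi * i / m"
    have cos: "harmonic_frame D m 0 i = sqrt (2 / D) * cos (?x i)"
      and sin: "harmonic_frame D m 1 i = sqrt (2 / D) * sin (?x i)" for i
      using False by (simp_all add: harmonic_frame_def harmonic_freq_def harmonic_phase_def cos_diff)
    have sin_pos: "sin (?x i) > 0" if "0 < i" "i < m" for i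
      using that by (intro sin_gt_zero) (auto simp: field_simps)
    have sin_nonneg: "sin (?x i) \<ge> 0" if "i < m" for i
      using sin_pos[of i] that by (cases "i = 0") auto
    show ?thesis
    proof (cases "j = 0 \<and> j' = 0")
      case True
      then show ?thesis
        using assms(1) c by (intro that[of 0]) (simp_all add: cos)
    next
      case False
      then have "0 < j \<or> 0 < j'" by auto
      then have "sin (?x j) + sin (?x j') > 0"
        using sin_pos sin_nonneg assms(2,3) by (auto intro: add_pos_nonneg add_nonneg_pos)
      moreover have "harmonic_frame D m 1 j + harmonic_frame D m 1 j' = sqrt (2 / D) * (sin (?x j) + sin (?x j'))"
        unfolding sin by (simp only: distrib_left)
      ultimately have "harmonic_frame D m 1 j + harmonic_frame D m 1 j' > 0"
        using c by simp
      then have "harmonic_frame D m 1 j \<noteq> - harmonic_frame D m 1 j'" by linarith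
      with assms(1) show ?thesis by (intro that[of 1]) auto
    qed
  qed
qed

lemma harmonic_frame_inj:
  assumes "2 \<le> D" and "j < m" and "j' < m"
    and same: "\<And>p. p < D \<Longrightarrow> harmonic_frame D m p j = harmonic_frame D m p j'"
  shows "j = j'"
proof -
  have c: "sqrt (2 / D) > 0" using assms(1) by simp
  show ?thesis
  proof (cases "odd D")
    case True
    \<comment> \<open>Coordinates \<open>1\<close> and \<open>2\<close> are \<open>cos\<close> and \<open>sin\<close> of \<open>2 \<pi> j / m\<close>, which determine \<open>j\<close> modulo \<open>m\<close>.\<close>
    define x y where "x = pi * 2 * j / m" and "y = pi * 2 * j' / m"
    have "3 \<le> D" using assms(1) True by presburger
    then have "harmonic_frame D m 1 j = harmonic_frame D m 1 j'" "harmonic_frame D m 2 j = harmonic_frame D m 2 j'"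
      using same by simp_all
    then have "cos x = cos y" and "sin x = sin y"
      using True c by (simp_all add: x_def y_def harmonic_frame_def harmonic_freq_def harmonic_phase_def cos_diff)
    then have "cos (x - y) = 1"
      by (simp add: cos_diff flip: power2_eq_square)
    then obtain t :: int where "x - y = t * 2 * pi"
      by (auto simp: cos_one_2pi_int)
    then have "pi * 2 * (real j - real j') = pi * 2 * (t * m)"
      using assms(2) by (simp add: x_def y_def field_simps)
    then have "real_of_int (int j - int j') = real_of_int (t * int m)"
      by simp
    then have "int j - int j' = t * int m"
      by (simp only: of_int_eq_iff)
    moreover have "\<bar>int j - int j'\<bar> < int m"
      using assms(2,3) by linarith
    ultimately have "\<bar>t\<bar> * int m < 1 * int m"
      by (simp add: abs_mult)
    then have "\<bar>t\<bar> < 1"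
      by (rule mult_right_less_imp_less) simp
    then have "t = 0" by simp
    with \<open>int j - int j' = t * int m\<close> show ?thesis by simp
  next
    case False
    \<comment> \<open>Coordinate \<open>0\<close> is \<open>cos (\<pi> j / m)\<close>, injective on \<open>[0, \<pi>]\<close>.\<close>
    have "harmonic_frame D m 0 j = harmonic_frame D m 0 j'"
      using same assms(1) by simp
    then have "cos (pi * j / m) = cos (pi * j' / m)"
      using False c by (simp add: harmonic_frame_def harmonic_freq_def harmonic_phase_def)
    moreover have "0 \<le> pi * i / m \<and> pi * i / m \<le> pi" if "i < m" for i
      using that by (simp add: field_simps)
    ultimately have "pi * j / m = pi * j' / m"
      using assms(2,3) cos_inj_pi by blast
    then show ?thesis using assms(2) by simp
  qed
qed

lemma unit_tight_frame_without_antipodes_exists: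
  assumes "2 \<le> CARD('n::finite)" and "CARD('n) \<le> m"
  obtains V :: "(real^'n) set"
  where "card V = m" and "V \<subseteq> sphere 0 1" and "V \<inter> uminus ` V = {}"
    and "\<And>i k. (\<Sum>v\<in>V. v $ i * v $ k) = (if i = k then card V / CARD('n) else 0)"
proof -
  let ?D = "CARD('n)"
  obtain h where h: "bij_betw h (UNIV :: 'n set) {..<?D}"
    using ex_bij_betw_finite_nat[of "UNIV :: 'n set"] by (auto simp: atLeast0LessThan)
  have h_less: "h i < ?D" for i
    using h by (auto simp: bij_betw_def)
  have h_surj: "\<exists>i. h i = p" if "p < ?D" for p
  proof -
    have "p \<in> range h" using h that by (simp add: bij_betw_def)
    then show ?thesis by auto
  qed
  define v where "v j = (\<chi> i. harmonic_frame ?D m (h i) j)" for j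
  have v_eq: "v j = v j' \<longleftrightarrow> (\<forall>p<?D. harmonic_frame ?D m p j = harmonic_frame ?D m p j')"
    and v_antipodal: "v j = - v j' \<longleftrightarrow> (\<forall>p<?D. harmonic_frame ?D m p j = - harmonic_frame ?D m p j')" for j j'
    using h_less h_surj by (auto simp: v_def vec_eq_iff)
  have inj: "inj_on v {..<m}"
    using harmonic_frame_inj[OF assms(1)] by (auto intro!: inj_onI simp: v_eq)
  have sum_v: "(\<Sum>v\<in>v ` {..<m}. F v) = (\<Sum>j<m. F (v j))" for F :: "real^'n \<Rightarrow> real"
    using inj by (simp add: sum.reindex)
  show ?thesis
  proof
    show "card (v ` {..<m}) = m"
      using inj by (simp add: card_image)
    have "v j \<bullet> v j = (\<Sum>p<?D. (harmonic_frame ?D m p j)\<^sup>2)" for j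
      unfolding v_def inner_vec_def
      using sum.reindex_bij_betw[OF h, of "\<lambda>p. (harmonic_frame ?D m p j)\<^sup>2"] by (simp add: power2_eq_square)
    then show "v ` {..<m} \<subseteq> sphere 0 1"
      using assms(1) harmonic_frame_unit[of ?D m] by (auto simp: norm_eq_1)
    have "v j \<noteq> - v j'" if j: "j < m" and j': "j' < m" for j j'
    proof -
      obtain p where "p < ?D" and "harmonic_frame ?D m p j \<noteq> - harmonic_frame ?D m p j'"
        using harmonic_frame_not_antipodal[OF assms(1) j j'] .
      then show ?thesis by (auto simp: v_antipodal)
    qed
    then show "v ` {..<m} \<inter> uminus ` v ` {..<m} = {}"
      by blast
    have "(\<Sum>v\<in>v ` {..<m}. v $ i * v $ k) = (\<Sum>j<m. harmonic_frame ?D m (h i) j * harmonic_frame ?D m (h k) j)"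
      for i k unfolding sum_v by (simp add: v_def)
    moreover have "h i = h k \<longleftrightarrow> i = k" for i k
      using bij_betw_imp_inj_on[OF h] by (auto dest: injD)
    ultimately show "(\<Sum>v\<in>v ` {..<m}. v $ i * v $ k) = (if i = k then card (v ` {..<m}) / ?D else 0)" for i k
      using harmonic_frame_orthogonal[OF h_less h_less assms(2)] inj by (simp add: card_image)
  qed
qed

theorem proposition3p2:
  fixes d n :: nat
  assumes "d \<ge> 1"
    and "CARD('n::finite) = d + 1"
    and "even n"
    and "n \<ge> 2 * d + 4"
    and "\<not> (even d \<and> n = 2 * d + 6)"
  shows "\<exists>X :: (real^'n) set. spherical_design 3 X \<and> card X = n"
proof -
  have "2 \<le> CARD('n)" and "CARD('n) \<le> n div 2"
    using assms(1-4) by auto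
  then obtain V :: "(real^'n) set" where V: "card V = n div 2" "V \<subseteq> sphere 0 1" "V \<inter> uminus ` V = {}"
    and "\<And>i k. (\<Sum>v\<in>V. v $ i * v $ k) = (if i = k then card V / CARD('n) else 0)"
    by (rule unit_tight_frame_without_antipodes_exists) blast
  moreover have "finite V" and "V \<noteq> {}"
    using card_gt_0_iff[of V] V(1) assms(4) by auto
  ultimately show ?thesis
    using spherical_3_design_antipodal_tight_frame[of V] assms(3) by auto
qed

end
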